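(* (a) Let $\rho(0)=1$, $\rho(t)=\frac1{2t}(1-\sqrt{1-4t})$ for $0<t\le1/4$, and $\kappa(t)=(1-\sqrt2\,\rho(t)t)^{-1}$ for $0\le t\le1/4$. Then $\rho$ and $\kappa$ are increasing on $[0,1/4]$, $\rho(t)\le\kappa(t)$ for all $t\in[0,1/4]$, and for every positive integer $n$, $\rho\big(\tfrac{n}{(n+1)^2}\big)=\tfrac{n+1}{n}$ and $\kappa\big(\tfrac{n}{(n+1)^2}\big)=\big(1-\tfrac{\sqrt2}{n+1}\big)^{-1}<\big(1-\tfrac{10}{7(n+1)}\big)^{-1}$. (b) Let $A\in M_2(\mathbb C)$ satisfy $\|A-A^2\|_{HS}\le\varepsilon<2/9$. Then $\|2A-I\|_{HS}\ge(2-6\|A-A^2\|_{HS})^{1/2}$, and $\operatorname{tr}(A)\in\bigcup_{j\in\{0,1,2\}}\overline{\mathbb D}_j(\sqrt2\rho(\varepsilon)\varepsilon)\subseteq\bigcup_{j\in\{0,1,2\}}\overline{\mathbb D}_j(10/21)$. Moreover: if $|\operatorname{tr}(A)-2|<1/2$ then $\|I-A\|_{HS}\le\kappa(\varepsilon)\varepsilon$; if $|\operatorname{tr}(A)|<1/2$ then $\|A\|_{HS}\le\kappa(\varepsilon)\varepsilon$; if $|\operatorname{tr}(A)-1|<1/2$ then there is a rank-one idempotent $P\in M_2(\mathbb C)$ with $\|A-P\|_{HS}\le\rho(\varepsilon)\varepsilon$.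
   Context: $\|A\|_{HS}=(\operatorname{tr}(A^*A))^{1/2}$ is the Hilbert–Schmidt norm; $\overline{\mathbb D}_w(r)$ is the closed disc in $\mathbb C$ of centre $w$ and radius $r$. *)

theory Defs
  imports "HOL-Analysis.Analysis"
begin

definition rho :: "real \<Rightarrow> real" where
  "rho t = (if t = 0 then 1 else (1 - sqrt (1 - 4 * t)) / (2 * t))"

definition kappa :: "real \<Rightarrow> real" where
  "kappa t = inverse (1 - sqrt 2 * rho t * t)"

definition adjoint_mat :: "complex^'n^'n \<Rightarrow> complex^'n^'n" where
  "adjoint_mat A = (\<chi> i j. cnj (A $ j $ i))"

definition hs_norm :: "complex^'n^'n \<Rightarrow> real" where
  "hs_norm A = sqrt (Re (trace (adjoint_mat A ** A)))"

end

theory Submission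
  imports Defs
begin

text \<open>
  Part (a) is elementary calculus on the closed forms \<open>rho t = 2/(1 + sqrt (1 - 4t))\<close>, the
  fact that \<open>rho t * t\<close> is the smaller root of \<open>x\<^sup>2 - x + t\<close>, and the fixed point equation
  \<open>rho t = 1/(1 - rho t * t)\<close>, which compared with \<open>kappa t = 1/(1 - sqrt 2 rho t * t)\<close> gives
  \<open>rho \<le> kappa\<close>.

  Part (b) is reduced to scalars.  A complex \<open>z\<close> with \<open>\<bar>z - z\<^sup>2\<bar> = m < 1/4\<close> lies within
  \<open>rho m * m\<close> of 0 or 1.  By Schur triangularisation \<open>A = U T U\<^sup>*\<close> with \<open>U\<close> unitary and \<open>T\<close>
  upper triangular; all quantities in the statement are invariant under this conjugation.
  For \<open>T\<close> the defect \<open>T - T\<^sup>2\<close> has diagonal \<open>t\<^sub>i\<^sub>i - t\<^sub>i\<^sub>i\<^sup>2\<close> and corner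
  \<open>t12 (1 - t11 - t22)\<close>.  Rounding the diagonal to \<open>b1, b2 \<in> {0, 1}\<close> places the trace near
  \<open>b1 + b2\<close>; if \<open>b1 = b2\<close> the corner entry bounds \<open>t12\<close> by a factor \<open>kappa\<close> and \<open>T\<close> is close
  to 0 or \<open>I\<close>, and if \<open>b1 \<noteq> b2\<close> the rounded triangular matrix is an idempotent of trace 1,
  hence of rank one.
\<close>

lemma rho_closed_form:
  assumes "0 \<le> t" "t \<le> 1/4"
  shows "rho t = 2 / (1 + sqrt (1 - 4*t))"
proof (cases "t = 0")
  case True
  then show ?thesis by (simp add: rho_def)
next
  case False
  define s where "s = sqrt (1 - 4*t)"
  have "s \<ge> 0" and "s^2 = 1 - 4*t"
    using assms by (auto simp: s_def)
  then have "(1 - s) / (2*t) = 2 / (1 + s)"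
    using False by (simp add: field_simps power2_eq_square)
  then show ?thesis
    using False by (simp add: rho_def s_def)
qed

text \<open>\<open>rho t * t\<close> is the smaller root of \<open>x\<^sup>2 - x + t\<close>; this is how \<open>rho\<close> enters the estimates.\<close>
lemma rho_times_arg:
  assumes "0 \<le> t" "t \<le> 1/4"
  shows "rho t * t = (1 - sqrt (1 - 4*t)) / 2"
  using assms by (cases "t = 0") (auto simp: rho_def field_simps)

lemma rho_pos:
  assumes "0 \<le> t" "t \<le> 1/4"
  shows "rho t > 0"
  using rho_closed_form[OF assms] assms by (simp add: add_pos_nonneg)

text \<open>Monotonicity of \<open>rho\<close>: the denominator \<open>1 + sqrt (1 - 4t)\<close> decreases.\<close>
lemma rho_strict_mono: "strict_mono_on {0..1/4} rho"
proof (rule strict_mono_onI)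
  fix x y :: real
  assume "x \<in> {0..1/4}" "y \<in> {0..1/4}" "x < y"
  then have "sqrt (1 - 4*y) < sqrt (1 - 4*x)" and "0 \<le> sqrt (1 - 4*y)"
    by auto
  then have "2 / (1 + sqrt (1 - 4*x)) < 2 / (1 + sqrt (1 - 4*y))"
    by (intro divide_strict_left_mono) (auto intro!: add_pos_nonneg mult_pos_pos)
  with \<open>x \<in> {0..1/4}\<close> \<open>y \<in> {0..1/4}\<close> show "rho x < rho y"
    by (simp add: rho_closed_form)
qed

lemma rho_mono: "0 \<le> x \<Longrightarrow> x \<le> y \<Longrightarrow> y \<le> 1/4 \<Longrightarrow> rho x \<le> rho y"
  by (rule strict_mono_on_leD[OF rho_strict_mono]) auto

lemma rho_fixed_point:
  assumes "0 \<le> t" "t \<le> 1/4"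
  shows "rho t = 1 / (1 - rho t * t)"
proof -
  have denominator: "1 - rho t * t = (1 + sqrt (1 - 4*t)) / 2"
    unfolding rho_times_arg[OF assms] by (simp add: field_simps)
  show ?thesis
    by (subst denominator) (simp add: rho_closed_form[OF assms])
qed

text \<open>The rational bound on \<open>sqrt 2\<close> behind all numerical constants of the statement.\<close>
lemma sqrt_two_lt: "sqrt 2 < 10/7"
  by (rule real_less_lsqrt) (auto simp: power2_eq_square)

text \<open>Since \<open>rho t * t \<le> 1/2\<close> and \<open>sqrt 2 < 2\<close>, \<open>kappa\<close> is finite and positive on \<open>[0, 1/4]\<close>.\<close>
lemma kappa_denominator_pos:
  assumes "0 \<le> t" "t \<le> 1/4"
  shows "0 < 1 - sqrt 2 * rho t * t"
proof -
  have "sqrt 2 * (rho t * t) \<le> 10/7 * (1/2)"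
    using assms sqrt_two_lt by (intro mult_mono) (auto simp: rho_times_arg)
  then show ?thesis by (simp add: mult.assoc)
qed

text \<open>Monotonicity of \<open>kappa\<close> follows from that of the smaller root \<open>rho t * t\<close>.\<close>
lemma kappa_strict_mono: "strict_mono_on {0..1/4} kappa"
proof (rule strict_mono_onI)
  fix x y :: real
  assume x: "x \<in> {0..1/4}" and y: "y \<in> {0..1/4}" and "x < y"
  then have "rho x * x < rho y * y"
    by (simp add: rho_times_arg)
  then have "1 - sqrt 2 * rho y * y < 1 - sqrt 2 * rho x * x"
    by (simp add: mult.assoc)
  then show "kappa x < kappa y"
    using kappa_denominator_pos[of x] kappa_denominator_pos[of y] x y
    by (simp add: kappa_def less_imp_inverse_less)
qed

text \<open>Comparing \<open>rho = 1/(1 - rho t * t)\<close> with \<open>kappa = 1/(1 - sqrt 2 * rho t * t)\<close>.\<close>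
lemma rho_le_kappa:
  assumes "0 \<le> t" "t \<le> 1/4"
  shows "rho t \<le> kappa t"
proof -
  have "1 * (rho t * t) \<le> sqrt 2 * (rho t * t)"
    using assms by (intro mult_right_mono) (auto simp: rho_times_arg)
  then have "1 / (1 - rho t * t) \<le> 1 / (1 - sqrt 2 * rho t * t)"
    using kappa_denominator_pos[OF assms] by (intro divide_left_mono) (auto simp: mult.assoc)
  then show ?thesis
    using rho_fixed_point[OF assms] by (simp add: kappa_def divide_inverse)
qed

text \<open>At \<open>t = n/(n+1)\<^sup>2\<close> the discriminant \<open>1 - 4t\<close> is the perfect square \<open>((n-1)/(n+1))\<^sup>2\<close>.\<close>
lemma rho_special_values:
  fixes n :: nat
  assumes "n \<ge> 1"
  defines "t \<equiv> real n / (real n + 1)^2"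
  shows "rho t = (real n + 1) / real n" and "rho t * t = 1 / (real n + 1)"
proof -
  have "1 - 4*t = ((real n - 1) / (real n + 1))^2"
    by (simp add: t_def divide_simps power2_eq_square) (simp add: algebra_simps)
  with assms have sqrt_eq: "sqrt (1 - 4*t) = (real n - 1) / (real n + 1)"
    by simp
  have "4 * real n \<le> (real n + 1)^2"
    using zero_le_power2[of "real n - 1"] by (simp add: power2_eq_square algebra_simps)
  then have t: "0 \<le> t" "t \<le> 1/4"
    by (auto simp: t_def field_simps)
  show "rho t = (real n + 1) / real n"
    unfolding rho_closed_form[OF t] sqrt_eq using assms by (simp add: field_simps)
  show "rho t * t = 1 / (real n + 1)"
    unfolding rho_times_arg[OF t] sqrt_eq using assms by (simp add: field_simps)
qed

lemma kappa_special_values: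
  fixes n :: nat
  assumes "n \<ge> 1"
  shows "kappa (real n / (real n + 1)^2) = inverse (1 - sqrt 2 / (real n + 1))"
  unfolding kappa_def mult.assoc rho_special_values(2)[OF assms] by simp

text \<open>The comparison with \<open>(1 - 10/(7(n+1)))\<^sup>-\<^sup>1\<close> comes from \<open>sqrt 2 < 10/7\<close>.\<close>
lemma kappa_special_bound:
  fixes n :: nat
  assumes "n \<ge> 1"
  shows "inverse (1 - sqrt 2 / (real n + 1)) < inverse (1 - 10 / (7 * (real n + 1)))"
proof (rule less_imp_inverse_less)
  have "sqrt 2 / (real n + 1) < (10/7) / (real n + 1)"
    using sqrt_two_lt by (intro divide_strict_right_mono) auto
  then show "1 - 10 / (7 * (real n + 1)) < 1 - sqrt 2 / (real n + 1)"
    by simp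
  show "0 < 1 - 10 / (7 * (real n + 1))"
    using assms by (simp add: field_simps)
qed

text \<open>The radius \<open>sqrt 2 * rho e * e\<close> of the discs around \<open>0, 1, 2\<close> stays below
  \<open>rho (2/9) = 3/2\<close> times \<open>sqrt 2 * 2/9\<close>, hence below \<open>10/21 < 1/2\<close>.\<close>
lemma disc_radius_le:
  assumes "0 \<le> e" "e < 2/9"
  shows "sqrt 2 * rho e * e \<le> 10/21"
proof -
  have "rho e \<le> rho (2/9)"
    using assms by (intro rho_mono) auto
  also have "rho (2/9) = 3/2"
    using rho_special_values(1)[of 2] by (simp add: power2_eq_square)
  finally have "rho e \<le> 3/2" .
  then have rho_times_e: "rho e * e \<le> 3/2 * (2/9)"
    using assms by (intro mult_mono) auto
  have "sqrt 2 * (rho e * e) \<le> 10/7 * (3/2 * (2/9))"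
    using sqrt_two_lt assms rho_pos[of e] by (intro mult_mono[OF _ rho_times_e]) auto
  then show ?thesis
    by (simp add: mult.assoc)
qed

lemma small_solution_le_rho:
  fixes r m :: real
  assumes "0 \<le> m" "m \<le> 1/4" and "r \<le> m + r^2" and "r < 1/2"
  shows "r \<le> rho m * m"
proof -
  define s where "s = sqrt (1 - 4*m)"
  have "s \<ge> 0" and s2: "s^2 = 1 - 4*m"
    using assms by (auto simp: s_def)
  have "(r - (1 - s)/2) * (r - (1 + s)/2) = r^2 - r + m"
    using s2 by (simp add: field_simps power2_eq_square)
  also have "\<dots> \<ge> 0"
    using assms(3) by simp
  finally have "(r - (1 - s)/2) * (r - (1 + s)/2) \<ge> 0" .
  moreover have "r - (1 + s)/2 < 0"
    using \<open>s \<ge> 0\<close> assms(4) by simp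
  ultimately have "r \<le> (1 - s)/2"
    by (simp add: zero_le_mult_iff)
  then show ?thesis
    using assms by (simp add: rho_times_arg s_def)
qed

lemma scalar_near_idempotent:
  fixes z :: complex
  assumes defect: "cmod (z - z^2) \<le> e" and "e < 1/4"
  obtains b :: nat where "b \<le> 1" "cmod (z - of_nat b) \<le> rho e * cmod (z - z^2)"
proof -
  define m where "m = cmod (z - z^2)"
  have m: "0 \<le> m" "m \<le> 1/4"
    using assms by (auto simp: m_def)
  (* applied to both w = z and w = 1 - z, which share the defect w - w^2 = z - z^2 *)
  have root_bound: "cmod w \<le> rho e * m" if "w - w^2 = z - z^2" "cmod w < 1/2" for w
  proof -
    have "cmod w \<le> cmod (w - w^2) + cmod (w^2)"
      using norm_triangle_ineq[of "w - w^2" "w^2"] by simp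
    then have "cmod w \<le> m + (cmod w)^2"
      using that(1) by (simp add: m_def norm_power)
    then have "cmod w \<le> rho m * m"
      using small_solution_le_rho[OF m] that(2) by blast
    also have "\<dots> \<le> rho e * m"
      using rho_mono[of m e] m assms by (intro mult_right_mono) (auto simp: m_def)
    finally show ?thesis .
  qed
  have "cmod z < 1/2 \<or> cmod (1 - z) < 1/2"
  proof (rule ccontr)
    assume "\<not> ?thesis"
    then have "1/2 * (1/2) \<le> cmod z * cmod (1 - z)"
      by (intro mult_mono) auto
    also have "\<dots> = m"
      by (simp add: m_def norm_mult[symmetric] algebra_simps power2_eq_square)
    finally show False
      using m \<open>e < 1/4\<close> defect by (simp add: m_def)
  qed
  then show ?thesis
  proof
    assume "cmod z < 1/2"
    then show ?thesis
      using root_bound[of z] that[of 0] by (simp add: m_def)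
  next
    assume "cmod (1 - z) < 1/2"
    then show ?thesis
      using root_bound[of "1 - z"] that[of 1]
      by (simp add: m_def norm_minus_commute algebra_simps power2_eq_square)
  qed
qed

text \<open>The real part of the identity \<open>(2z - 1)\<^sup>2 = 1 - 4(z - z\<^sup>2)\<close>: approximate idempotents
  stay away from the midpoint \<open>1/2\<close>.\<close>
lemma norm_twice_minus_one_sq:
  fixes z :: complex
  shows "1 - 4 * cmod (z - z^2) \<le> (cmod (2*z - 1))^2"
proof -
  have "(2*z - 1)^2 = 1 - 4 * (z - z^2)"
    by (simp add: power2_eq_square algebra_simps)
  then have "(cmod (2*z - 1))^2 = cmod (1 - 4 * (z - z^2))"
    by (metis norm_power)
  moreover have "1 \<le> cmod (1 - 4 * (z - z^2)) + cmod (4 * (z - z^2))"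
    using norm_triangle_ineq[of "1 - 4 * (z - z^2)" "4 * (z - z^2)"] by simp
  moreover have "cmod (4 * (z - z^2)) = 4 * cmod (z - z^2)"
    by (simp only: norm_mult) simp
  ultimately show ?thesis
    by simp
qed

text \<open>Cauchy--Schwarz in the form \<open>a + b \<le> sqrt 2 * \<parallel>(a, c, b)\<parallel>\<close>; it bounds the sum of the two
  diagonal defects by the full defect.\<close>
lemma sum_le_sqrt2_norm:
  fixes a b c :: real
  assumes "0 \<le> a" "0 \<le> b"
  shows "a + b \<le> sqrt 2 * sqrt (a^2 + c^2 + b^2)"
proof -
  have "2 * (a^2 + c^2 + b^2) - (a + b)^2 = (a - b)^2 + 2 * c^2"
    by (simp add: power2_eq_square algebra_simps)
  then have "(a + b)^2 \<le> 2 * (a^2 + c^2 + b^2)"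
    using zero_le_power2[of "a - b"] zero_le_power2[of c] by linarith
  then have "a + b \<le> sqrt (2 * (a^2 + c^2 + b^2))"
    by (rule real_le_rsqrt)
  then show ?thesis
    by (metis real_sqrt_mult)
qed

lemma sqrt_sum_squares_scale:
  fixes k x1 x2 x3 a1 a2 a3 :: real
  assumes "0 \<le> k" "0 \<le> x1" "x1 \<le> k*a1" "0 \<le> x2" "x2 \<le> k*a2" "0 \<le> x3" "x3 \<le> k*a3"
  shows "sqrt (x1^2 + x2^2 + x3^2) \<le> k * sqrt (a1^2 + a2^2 + a3^2)"
proof -
  have "x1^2 \<le> (k*a1)^2" "x2^2 \<le> (k*a2)^2" "x3^2 \<le> (k*a3)^2"
    using assms by (auto intro!: power_mono)
  then have "sqrt (x1^2 + x2^2 + x3^2) \<le> sqrt (k^2 * (a1^2 + a2^2 + a3^2))"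
    by (intro real_sqrt_le_mono) (simp add: power_mult_distrib algebra_simps)
  also have "\<dots> = k * sqrt (a1^2 + a2^2 + a3^2)"
    using assms(1) by (simp add: real_sqrt_mult)
  finally show ?thesis .
qed

lemma near_of_nat_unique:
  fixes z :: complex
  assumes "cmod (z - of_nat j) < 1/2" "cmod (z - of_nat k) < 1/2"
  shows "j = k"
proof -
  have "cmod (of_nat k - of_nat j :: complex) < 1"
    using norm_triangle_lt[of "z - of_nat j" "of_nat k - z" 1] assms
    by (simp add: norm_minus_commute)
  then have "\<bar>real k - real j\<bar> < 1"
    by (metis norm_of_real of_real_diff of_real_of_nat_eq)
  then show ?thesis
    by linarith
qed

lemma adjoint_mat_mult: "adjoint_mat (X ** Y) = adjoint_mat Y ** (adjoint_mat X :: complex^'n^'n)"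
  by (simp add: adjoint_mat_def matrix_matrix_mult_def vec_eq_iff mult.commute)

lemma adjoint_mat_adjoint_mat [simp]: "adjoint_mat (adjoint_mat X) = X"
  by (simp add: adjoint_mat_def vec_eq_iff)

lemma hs_norm_entries: "hs_norm X = sqrt (\<Sum>i\<in>UNIV. \<Sum>k\<in>UNIV. (cmod (X$k$i))^2)"
proof -
  have "trace (adjoint_mat X ** X) = (\<Sum>i\<in>UNIV. \<Sum>k\<in>UNIV. cnj (X$k$i) * X$k$i)"
    by (simp add: trace_def adjoint_mat_def matrix_matrix_mult_def)
  also have "\<dots> = (\<Sum>i\<in>UNIV. \<Sum>k\<in>UNIV. complex_of_real ((cmod (X$k$i))^2))"
    by (intro sum.cong refl) (metis complex_norm_square mult.commute)
  finally show ?thesis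
    by (simp add: hs_norm_def Re_sum)
qed

lemma hs_norm_nonneg: "0 \<le> hs_norm X"
  by (simp add: hs_norm_entries sum_nonneg)

lemma hs_norm_minus_commute: "hs_norm (X - Y) = hs_norm (Y - X)"
  by (simp add: hs_norm_entries norm_minus_commute)

lemma hs_norm_upper_2x2:
  fixes X :: "complex^2^2"
  assumes "X$2$1 = 0"
  shows "hs_norm X = sqrt ((cmod (X$1$1))^2 + (cmod (X$1$2))^2 + (cmod (X$2$2))^2)"
  using assms by (simp add: hs_norm_entries sum_2)

lemma mat_2x2_eq_iff:
  "(X::'a^2^2) = Y \<longleftrightarrow> X$1$1 = Y$1$1 \<and> X$1$2 = Y$1$2 \<and> X$2$1 = Y$2$1 \<and> X$2$2 = Y$2$2"
  by (auto simp: vec_eq_iff forall_2)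

lemma mult_2x2_entry: "(X ** (Y::'a::semiring_1^2^2))$i$j = X$i$1 * Y$1$j + X$i$2 * Y$2$j"
  by (simp add: matrix_matrix_mult_def sum_2)

lemma trace_2x2: "trace (X::'a::semiring_1^2^2) = X$1$1 + X$2$2"
  by (simp add: trace_def sum_2)

definition unitary :: "complex^'n^'n \<Rightarrow> bool" where
  "unitary U \<longleftrightarrow> adjoint_mat U ** U = mat 1 \<and> U ** adjoint_mat U = mat 1"

text \<open>Conjugation \<open>X \<mapsto> U X U\<^sup>*\<close>; for unitary \<open>U\<close> it is an algebra automorphism preserving
  trace and Hilbert--Schmidt norm, which lets us pass to a triangular matrix.\<close>
definition conj_by :: "complex^'n^'n \<Rightarrow> complex^'n^'n \<Rightarrow> complex^'n^'n" where
  "conj_by U X = U ** X ** adjoint_mat U"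

lemma conj_by_diff: "conj_by U (X - Y) = conj_by U X - conj_by U Y"
  by (simp add: conj_by_def matrix_matrix_mult_def vec_eq_iff sum_subtractf ring_distribs)

lemma conj_by_scaleR: "conj_by U (c *\<^sub>R X) = c *\<^sub>R conj_by U X"
  unfolding conj_by_def by (metis matrix_scalar_ac scalar_matrix_assoc)

lemma conj_by_id: "unitary U \<Longrightarrow> conj_by U (mat 1) = mat 1"
  by (simp add: conj_by_def unitary_def)

lemma conj_by_mult: "unitary U \<Longrightarrow> conj_by U (X ** Y) = conj_by U X ** conj_by U Y"
  unfolding conj_by_def unitary_def by (metis matrix_mul_assoc matrix_mul_rid)

lemma trace_conj_by: "unitary U \<Longrightarrow> trace (conj_by U X) = trace X"
  unfolding conj_by_def unitary_def by (metis matrix_mul_assoc matrix_mul_rid trace_mul_sym)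

lemma hs_norm_conj_by:
  assumes "unitary U"
  shows "hs_norm (conj_by U X) = hs_norm X"
proof -
  have "adjoint_mat (conj_by U X) = conj_by U (adjoint_mat X)"
    by (simp add: conj_by_def adjoint_mat_mult matrix_mul_assoc)
  then have "trace (adjoint_mat (conj_by U X) ** conj_by U X) = trace (adjoint_mat X ** X)"
    using assms by (simp add: conj_by_mult[symmetric] trace_conj_by)
  then show ?thesis
    by (simp add: hs_norm_def)
qed

lemma eigenvector_2x2:
  fixes A :: "complex^2^2"
  obtains v1 v2 l where "(v1, v2) \<noteq> (0, 0)"
    "A$1$1 * v1 + A$1$2 * v2 = l * v1" "A$2$1 * v1 + A$2$2 * v2 = l * v2"
proof (cases "A$1$2 = 0")
  case True
  show ?thesis
    by (rule that[of 0 1 "A$2$2"]) (auto simp: True)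
next
  case False
  define a b c d where "a = A$1$1" and "b = A$1$2" and "c = A$2$1" and "d = A$2$2"
  define s where "s = csqrt ((a + d)^2 - 4*(a*d - b*c))"
  define l where "l = ((a + d) + s) / 2"
  have charpoly: "l^2 - (a + d)*l + (a*d - b*c) = 0"
  proof -
    have "2*l - (a + d) = s"
      by (simp add: l_def field_simps)
    then have "(2*l - (a + d))^2 = (a + d)^2 - 4*(a*d - b*c)"
      by (simp add: s_def)
    moreover have "4 * (l^2 - (a + d)*l + (a*d - b*c))
        = (2*l - (a + d))^2 - ((a + d)^2 - 4*(a*d - b*c))"
      by (simp add: power2_eq_square algebra_simps)
    ultimately show ?thesis
      by (metis diff_self mult_eq_0_iff zero_neq_numeral)
  qed
  show ?thesis
  proof (rule that[of b "l - a" l])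
    show "(b, l - a) \<noteq> (0, 0)"
      using False by (simp add: b_def)
    show "A$1$1 * b + A$1$2 * (l - a) = l * b"
      by (simp add: a_def b_def algebra_simps)
    show "A$2$1 * b + A$2$2 * (l - a) = l * (l - a)"
      using charpoly unfolding a_def b_def c_def d_def by (simp add: algebra_simps power2_eq_square)
  qed
qed

text \<open>Schur triangularisation in dimension 2: complete a unit eigenvector \<open>u\<close> to the unitary
  matrix with columns \<open>u\<close> and \<open>(-\<bar>u\<^sub>2, \<bar>u\<^sub>1)\<close>.\<close>
lemma schur_2x2:
  fixes A :: "complex^2^2"
  obtains U where "unitary U" "(adjoint_mat U ** A ** U)$2$1 = 0"
proof -
  obtain v1 v2 l where nz: "(v1, v2) \<noteq> (0, 0)"
    and e1: "A$1$1 * v1 + A$1$2 * v2 = l * v1" and e2: "A$2$1 * v1 + A$2$2 * v2 = l * v2"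
    by (rule eigenvector_2x2)
  define n where "n = sqrt ((cmod v1)^2 + (cmod v2)^2)"
  have "(cmod v1)^2 + (cmod v2)^2 > 0"
    using nz by (auto simp: add_pos_nonneg add_nonneg_pos)
  then have "n > 0" and n2: "n^2 = (cmod v1)^2 + (cmod v2)^2"
    by (auto simp: n_def)
  define u1 u2 where "u1 = v1 / of_real n" and "u2 = v2 / of_real n"
  have unit: "u1 * cnj u1 + u2 * cnj u2 = 1"
  proof -
    have "u1 * cnj u1 = v1 * cnj v1 / of_real (n^2)" "u2 * cnj u2 = v2 * cnj v2 / of_real (n^2)"
      by (simp_all add: u1_def u2_def power2_eq_square)
    then have "u1 * cnj u1 + u2 * cnj u2 = of_real ((cmod v1)^2 + (cmod v2)^2) / of_real (n^2)"
      by (simp add: complex_norm_square[symmetric] add_divide_distrib del: of_real_power)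
    then show ?thesis
      using \<open>n > 0\<close> unfolding n2[symmetric] by simp
  qed
  have f1: "A$1$1 * u1 + A$1$2 * u2 = l * u1" and f2: "A$2$1 * u1 + A$2$2 * u2 = l * u2"
    using e1 e2 \<open>n > 0\<close> by (simp_all add: u1_def u2_def field_simps)
  define U :: "complex^2^2" where "U = vector [vector [u1, - cnj u2], vector [u2, cnj u1]]"
  have U: "U$1$1 = u1" "U$1$2 = - cnj u2" "U$2$1 = u2" "U$2$2 = cnj u1"
    by (simp_all add: U_def)
  have adjoint_U: "adjoint_mat U $i$j = cnj (U$j$i)" for i j
    by (simp add: adjoint_mat_def)
  show ?thesis
  proof (rule that)
    show "unitary U"
      unfolding unitary_def mat_2x2_eq_iff
      using unit by (simp add: mult_2x2_entry adjoint_U U mat_def algebra_simps)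
    have "(adjoint_mat U ** A ** U)$2$1
        = - u2 * (A$1$1 * u1 + A$1$2 * u2) + u1 * (A$2$1 * u1 + A$2$2 * u2)"
      by (simp add: mult_2x2_entry adjoint_U U algebra_simps)
    also have "\<dots> = 0"
      by (simp add: f1 f2)
    finally show "(adjoint_mat U ** A ** U)$2$1 = 0" .
  qed
qed

lemma schur_form_2x2:
  fixes A :: "complex^2^2"
  obtains U T where "unitary U" "T$2$1 = 0" "A = conj_by U T"
proof -
  obtain U where U: "unitary U" and lower: "(adjoint_mat U ** A ** U)$2$1 = 0"
    by (rule schur_2x2)
  have "A = conj_by U (adjoint_mat U ** A ** U)"
    using U unfolding conj_by_def unitary_def by (metis matrix_mul_assoc matrix_mul_lid matrix_mul_rid)
  with U lower show ?thesis
    using that by blast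
qed

lemma rows_2x2: "rows (P::'a::field^2^2) = {row 1 P, row 2 P}"
  unfolding rows_def by (auto simp: UNIV_2)

lemma vec_2_eq_iff: "(x::'a^2) = y \<longleftrightarrow> x$1 = y$1 \<and> x$2 = y$2"
  by (auto simp: vec_eq_iff forall_2)

lemma rank_eq_1I:
  fixes P :: "'a::field^2^2"
  assumes "r \<noteq> 0" "r \<in> rows P" "\<And>x. x \<in> rows P \<Longrightarrow> \<exists>k. x = k *s r"
  shows "rank P = 1"
  unfolding row_rank_def_gen
proof (rule vec.dim_unique[of "{r}"])
  show "{r} \<subseteq> rows P" "vec.independent {r}"
    using assms(1,2) by auto
  show "rows P \<subseteq> vec.span {r}"
    using assms(3) by (auto simp: vec.span_singleton)
qed simp

lemma rank_2x2_singular: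
  fixes P :: "'a::field^2^2"
  assumes "P \<noteq> 0" and "det P = 0"
  shows "rank P = 1"
proof -
  have dt: "P$1$1 * P$2$2 = P$1$2 * P$2$1"
    using assms(2) by (simp add: det_2)
  show ?thesis
  proof (cases "row 1 P = 0")
    case True
    then have "row 2 P \<noteq> 0"
      using assms(1) by (auto simp: mat_2x2_eq_iff vec_2_eq_iff row_def)
    then show ?thesis
      using True by (intro rank_eq_1I) (auto simp: rows_2x2 intro: exI[of _ 0] exI[of _ 1])
  next
    case False
    have "\<exists>k. row 2 P = k *s row 1 P"
    proof (cases "P$1$1 = 0")
      case True
      then have "P$1$2 \<noteq> 0"
        using False by (auto simp: vec_2_eq_iff row_def)
      then have "P$2$1 = 0"
        using dt True by simp
      with True \<open>P$1$2 \<noteq> 0\<close> show ?thesis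
        by (intro exI[of _ "P$2$2 / P$1$2"]) (simp add: vec_2_eq_iff row_def)
    next
      case False
      with dt show ?thesis
        by (intro exI[of _ "P$2$1 / P$1$1"]) (simp add: vec_2_eq_iff row_def field_simps)
    qed
    with False show ?thesis
      by (intro rank_eq_1I) (auto simp: rows_2x2 intro: exI[of _ 1])
  qed
qed

text \<open>An idempotent \<open>2\<times>2\<close> matrix of trace 1 has rank one: by Cayley--Hamilton its determinant
  vanishes.\<close>
lemma idempotent_trace_one_rank_one:
  fixes P :: "complex^2^2"
  assumes idem: "P ** P = P" and tr: "trace P = 1"
  shows "rank P = 1"
proof (rule rank_2x2_singular)
  show "P \<noteq> 0"
    using tr by (auto simp: trace_2x2)
  have "P$1$1 * P$1$1 + P$1$2 * P$2$1 = P$1$1"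
    using arg_cong[OF idem, of "\<lambda>X. X$1$1"] by (simp add: mult_2x2_entry)
  moreover have "P$2$2 = 1 - P$1$1"
    using tr by (simp add: trace_2x2 algebra_simps)
  ultimately show "det P = 0"
    unfolding det_2 by (simp add: right_diff_distrib) (metis add_diff_cancel_left')
qed

text \<open>For \<open>T = [[t11, t12], [0, t22]]\<close> the defect \<open>T - T\<^sup>2\<close> is upper
  triangular with diagonal \<open>t\<^sub>i\<^sub>i - t\<^sub>i\<^sub>i\<^sup>2\<close> and corner \<open>t12 (1 - t11 - t22)\<close>, so every estimate
  reduces to scalar estimates on these three entries.\<close>
locale upper_near_idempotent =
  fixes T :: "complex^2^2" and \<epsilon> :: real
  assumes lower_zero: "T$2$1 = 0"
    and defect_le: "hs_norm (T - T ** T) \<le> \<epsilon>"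
    and eps_small: "\<epsilon> < 2/9"
begin

abbreviation "t11 \<equiv> T$1$1"
abbreviation "t12 \<equiv> T$1$2"
abbreviation "t22 \<equiv> T$2$2"

abbreviation "m1 \<equiv> cmod (t11 - t11^2)"
abbreviation "m2 \<equiv> cmod (t22 - t22^2)"
abbreviation "q \<equiv> cmod t12 * cmod (1 - t11 - t22)"

text \<open>The common radius of the discs around \<open>0, 1, 2\<close> containing the trace.\<close>
abbreviation "r \<equiv> sqrt 2 * rho \<epsilon> * \<epsilon>"

lemma defect_entries: "hs_norm (T - T ** T) = sqrt (m1^2 + q^2 + m2^2)"
proof -
  have "(T - T ** T)$1$1 = t11 - t11^2" "(T - T ** T)$2$2 = t22 - t22^2"
    "(T - T ** T)$2$1 = 0" "(T - T ** T)$1$2 = t12 * (1 - t11 - t22)"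
    by (simp_all add: mult_2x2_entry lower_zero power2_eq_square algebra_simps)
  then show ?thesis
    by (simp add: hs_norm_upper_2x2 norm_mult power_mult_distrib)
qed

lemma eps_nonneg: "0 \<le> \<epsilon>"
  using defect_le hs_norm_nonneg[of "T - T ** T"] by linarith

lemma eps_lt_quarter: "\<epsilon> < 1/4"
  using eps_small by simp

lemma diagonal_defects_le: "m1 \<le> \<epsilon>" "m2 \<le> \<epsilon>"
proof -
  have "m1 \<le> sqrt (m1^2 + q^2 + m2^2)" "m2 \<le> sqrt (m1^2 + q^2 + m2^2)"
    by (auto intro!: real_le_rsqrt)
  then show "m1 \<le> \<epsilon>" "m2 \<le> \<epsilon>"
    using defect_le by (simp_all add: defect_entries)
qed

lemma diagonal_defects_sum: "m1 + m2 \<le> sqrt 2 * hs_norm (T - T ** T)"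
  unfolding defect_entries by (rule sum_le_sqrt2_norm) auto

text \<open>First claim of part (b): \<open>\<parallel>2T - I\<parallel>\<^sup>2 \<ge> \<bar>2t11 - 1\<bar>\<^sup>2 + \<bar>2t22 - 1\<bar>\<^sup>2 \<ge> 2 - 4(m1 + m2)\<close>.\<close>
lemma hs_norm_reflection_lower:
  "sqrt (2 - 6 * hs_norm (T - T ** T)) \<le> hs_norm (2 *\<^sub>R T - mat 1)"
proof -
  have "(2 *\<^sub>R T - mat 1)$1$1 = 2*t11 - 1" "(2 *\<^sub>R T - mat 1)$1$2 = 2*t12"
    "(2 *\<^sub>R T - mat 1)$2$1 = 0" "(2 *\<^sub>R T - mat 1)$2$2 = 2*t22 - 1"
    by (simp_all add: mat_def lower_zero scaleR_conv_of_real)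
  then have norm_eq: "hs_norm (2 *\<^sub>R T - mat 1)
      = sqrt ((cmod (2*t11 - 1))^2 + (cmod (2*t12))^2 + (cmod (2*t22 - 1))^2)"
    by (simp add: hs_norm_upper_2x2)
  have "sqrt 2 * hs_norm (T - T ** T) \<le> 3/2 * hs_norm (T - T ** T)"
    using sqrt_two_lt hs_norm_nonneg by (intro mult_right_mono) auto
  then have "2 - 6 * hs_norm (T - T ** T) \<le> 2 - 4 * m1 - 4 * m2"
    using diagonal_defects_sum by linarith
  also have "\<dots> \<le> (cmod (2*t11 - 1))^2 + (cmod (2*t12))^2 + (cmod (2*t22 - 1))^2"
    using norm_twice_minus_one_sq[of t11] norm_twice_minus_one_sq[of t22] zero_le_power2[of "cmod (2*t12)"]
    by linarith
  finally show ?thesis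
    unfolding norm_eq by (rule real_sqrt_le_mono)
qed

text \<open>Each diagonal entry is an approximate scalar idempotent and so rounds to 0 or 1.\<close>
definition rounds_to :: "nat \<Rightarrow> nat \<Rightarrow> bool" where
  "rounds_to b1 b2 \<longleftrightarrow> b1 \<le> 1 \<and> b2 \<le> 1 \<and>
     cmod (t11 - of_nat b1) \<le> rho \<epsilon> * m1 \<and> cmod (t22 - of_nat b2) \<le> rho \<epsilon> * m2"

lemma rounding_exists: obtains b1 b2 where "rounds_to b1 b2"
proof -
  obtain b1 where "b1 \<le> 1" "cmod (t11 - of_nat b1) \<le> rho \<epsilon> * m1"
    using scalar_near_idempotent diagonal_defects_le(1) eps_lt_quarter by blast
  moreover obtain b2 where "b2 \<le> 1" "cmod (t22 - of_nat b2) \<le> rho \<epsilon> * m2"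
    using scalar_near_idempotent diagonal_defects_le(2) eps_lt_quarter by blast
  ultimately show ?thesis
    using that by (auto simp: rounds_to_def)
qed

text \<open>The total rounding error is at most \<open>rho \<epsilon> (m1 + m2) \<le> r\<close>.\<close>
lemma rounding_error_le:
  assumes "rounds_to b1 b2"
  shows "cmod (t11 - of_nat b1) + cmod (t22 - of_nat b2) \<le> r"
proof -
  have "m1 + m2 \<le> sqrt 2 * \<epsilon>"
    using diagonal_defects_sum defect_le by (smt (verit) mult_left_mono real_sqrt_ge_zero)
  then have "rho \<epsilon> * (m1 + m2) \<le> rho \<epsilon> * (sqrt 2 * \<epsilon>)"
    using rho_pos[of \<epsilon>] eps_nonneg eps_lt_quarter by (intro mult_left_mono) auto
  then show ?thesis
    using assms by (simp add: rounds_to_def algebra_simps)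
qed

text \<open>The discs around \<open>0, 1, 2\<close> are disjoint, indeed of radius at most \<open>10/21\<close>.\<close>
lemma radius_lt_half: "r < 1/2"
  using disc_radius_le[OF eps_nonneg eps_small] by simp

lemma trace_rounding:
  assumes "rounds_to b1 b2"
  shows "cmod (trace T - of_nat (b1 + b2)) \<le> r"
proof -
  have "trace T - of_nat (b1 + b2) = (t11 - of_nat b1) + (t22 - of_nat b2)"
    by (simp add: trace_2x2)
  then have "cmod (trace T - of_nat (b1 + b2)) \<le> cmod (t11 - of_nat b1) + cmod (t22 - of_nat b2)"
    by (metis norm_triangle_ineq)
  then show ?thesis
    using rounding_error_le[OF assms] by linarith
qed

lemma rounding_determined:
  assumes "rounds_to b1 b2" "cmod (trace T - of_nat k) < 1/2"
  shows "b1 + b2 = k"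
  using near_of_nat_unique[of "trace T" "b1 + b2" k] trace_rounding[OF assms(1)] radius_lt_half assms(2)
  by linarith

text \<open>If both diagonal entries round to the same \<open>b\<close>, then \<open>\<bar>1 - t11 - t22\<bar> \<ge> 1 - r\<close>, so the
  corner of the defect controls \<open>t12\<close>: \<open>\<bar>t12\<bar> \<le> q / (1 - r) = kappa \<epsilon> q\<close>.\<close>
lemma corner_le_kappa:
  assumes "rounds_to b b"
  shows "cmod t12 \<le> kappa \<epsilon> * q"
proof -
  have "cmod (1 - 2 * of_nat b :: complex) = 1"
    using assms by (cases b) (auto simp: rounds_to_def)
  moreover have "1 - 2 * of_nat b = (1 - t11 - t22) + (t11 - of_nat b) + (t22 - of_nat b)"
    by simp
  ultimately have "1 \<le> cmod ((1 - t11 - t22) + (t11 - of_nat b)) + cmod (t22 - of_nat b)"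
    using norm_triangle_ineq by metis
  then have "1 \<le> cmod (1 - t11 - t22) + cmod (t11 - of_nat b) + cmod (t22 - of_nat b)"
    using norm_triangle_ineq[of "1 - t11 - t22" "t11 - of_nat b"] by linarith
  then have far: "1 - r \<le> cmod (1 - t11 - t22)"
    using rounding_error_le[OF assms] by linarith
  have pos: "0 < 1 - r"
    using kappa_denominator_pos eps_nonneg eps_lt_quarter by simp
  have "cmod t12 * (1 - r) \<le> q"
    using far by (intro mult_left_mono) auto
  then show ?thesis
    using pos by (simp add: kappa_def field_simps)
qed

lemma scalar_case:
  assumes "rounds_to b b"
  shows "hs_norm (T - mat (of_nat b)) \<le> kappa \<epsilon> * \<epsilon>"
proof -
  have rho_kappa: "rho \<epsilon> \<le> kappa \<epsilon>"
    using rho_le_kappa eps_nonneg eps_lt_quarter by simp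
  then have kappa_pos: "0 \<le> kappa \<epsilon>"
    using rho_pos[of \<epsilon>] eps_nonneg eps_lt_quarter by simp
  have diagonal_le: "cmod (t11 - of_nat b) \<le> kappa \<epsilon> * m1" "cmod (t22 - of_nat b) \<le> kappa \<epsilon> * m2"
    using assms rho_kappa mult_right_mono[OF rho_kappa, of m1] mult_right_mono[OF rho_kappa, of m2]
    by (auto simp: rounds_to_def)
  have "hs_norm (T - mat (of_nat b))
      = sqrt ((cmod (t11 - of_nat b))^2 + (cmod t12)^2 + (cmod (t22 - of_nat b))^2)"
    by (simp add: hs_norm_upper_2x2 mat_def lower_zero)
  also have "\<dots> \<le> kappa \<epsilon> * sqrt (m1^2 + q^2 + m2^2)"
    using diagonal_le corner_le_kappa[OF assms] kappa_pos by (intro sqrt_sum_squares_scale) auto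
  also have "\<dots> \<le> kappa \<epsilon> * \<epsilon>"
    using defect_le kappa_pos by (simp add: defect_entries mult_left_mono)
  finally show ?thesis .
qed

text \<open>The case of different rounding: replacing the diagonal by its rounding \<open>(b1, b2)\<close>, a
  permutation of \<open>(1, 0)\<close>, gives an idempotent of trace 1 within \<open>rho \<epsilon> \<epsilon>\<close> of \<open>T\<close>.\<close>
lemma rank_one_case:
  assumes "rounds_to b1 b2" "b1 + b2 = 1"
  shows "\<exists>Q. Q ** Q = Q \<and> trace Q = 1 \<and> hs_norm (T - Q) \<le> rho \<epsilon> * \<epsilon>"
proof (intro exI conjI)
  define Q :: "complex^2^2" where "Q = vector [vector [of_nat b1, t12], vector [0, of_nat b2]]"
  have Q: "Q$1$1 = of_nat b1" "Q$1$2 = t12" "Q$2$1 = 0" "Q$2$2 = of_nat b2"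
    by (simp_all add: Q_def)
  have "of_nat b1 * of_nat b1 = (of_nat b1 :: complex)" "of_nat b2 * of_nat b2 = (of_nat b2 :: complex)"
    "of_nat b1 + of_nat b2 = (1 :: complex)"
    using assms by (auto simp: rounds_to_def le_Suc_eq of_nat_add[symmetric] simp del: of_nat_add)
  moreover have "of_nat b1 * t12 + t12 * of_nat b2 = t12"
    using calculation(3) by (metis distrib_right mult.commute mult_1)
  ultimately show "Q ** Q = Q"
    by (simp add: mat_2x2_eq_iff mult_2x2_entry Q)
  show "trace Q = 1"
    using assms(2) by (simp add: trace_2x2 Q of_nat_add[symmetric] del: of_nat_add)
  have "hs_norm (T - Q) = sqrt ((cmod (t11 - of_nat b1))^2 + 0^2 + (cmod (t22 - of_nat b2))^2)"
    by (simp add: hs_norm_upper_2x2 Q lower_zero)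
  also have "\<dots> \<le> rho \<epsilon> * sqrt (m1^2 + q^2 + m2^2)"
    using assms(1) rho_pos[of \<epsilon>] eps_nonneg eps_lt_quarter
    by (intro sqrt_sum_squares_scale) (auto simp: rounds_to_def)
  also have "\<dots> \<le> rho \<epsilon> * \<epsilon>"
    using defect_le rho_pos[of \<epsilon>] eps_nonneg eps_lt_quarter by (simp add: defect_entries)
  finally show "hs_norm (T - Q) \<le> rho \<epsilon> * \<epsilon>" .
qed

lemma trace_near_integer: "\<exists>j\<in>{0,1,2::nat}. cmod (trace T - of_nat j) \<le> r"
proof -
  obtain b1 b2 where b: "rounds_to b1 b2"
    by (rule rounding_exists)
  then have "b1 + b2 \<in> {0,1,2}"
    by (auto simp: rounds_to_def)
  with trace_rounding[OF b] show ?thesis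
    by blast
qed

lemma trace_near_two:
  assumes "cmod (trace T - 2) < 1/2"
  shows "hs_norm (mat 1 - T) \<le> kappa \<epsilon> * \<epsilon>"
proof -
  obtain b1 b2 where b: "rounds_to b1 b2"
    by (rule rounding_exists)
  then have "b1 + b2 = 2"
    using rounding_determined[OF b, of 2] assms by simp
  then have "b1 = 1" "b2 = 1"
    using b by (auto simp: rounds_to_def)
  with b have "rounds_to 1 1"
    by simp
  then show ?thesis
    using scalar_case[of 1] by (simp add: hs_norm_minus_commute)
qed

lemma trace_near_zero:
  assumes "cmod (trace T) < 1/2"
  shows "hs_norm T \<le> kappa \<epsilon> * \<epsilon>"
proof -
  obtain b1 b2 where b: "rounds_to b1 b2"
    by (rule rounding_exists)
  then have "b1 + b2 = 0"
    using rounding_determined[OF b, of 0] assms by simp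
  with b have "rounds_to 0 0"
    by auto
  then show ?thesis
    using scalar_case[of 0] by simp
qed

lemma trace_near_one:
  assumes "cmod (trace T - 1) < 1/2"
  shows "\<exists>Q. Q ** Q = Q \<and> trace Q = 1 \<and> hs_norm (T - Q) \<le> rho \<epsilon> * \<epsilon>"
proof -
  obtain b1 b2 where b: "rounds_to b1 b2"
    by (rule rounding_exists)
  then have "b1 + b2 = 1"
    using rounding_determined[OF b, of 1] assms by simp
  with b show ?thesis
    by (rule rank_one_case)
qed

end

lemma rho_kappa_properties:
  "strict_mono_on {0..1/4} rho \<and> strict_mono_on {0..1/4} kappa \<and>
    (\<forall>t\<in>{0..1/4}. rho t \<le> kappa t) \<and>
    (\<forall>n::nat. n \<ge> 1 \<longrightarrow>
       rho (real n / (real n + 1)^2) = (real n + 1) / real n \<and>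
       kappa (real n / (real n + 1)^2) = inverse (1 - sqrt 2 / (real n + 1)) \<and>
       inverse (1 - sqrt 2 / (real n + 1)) < inverse (1 - 10 / (7 * (real n + 1))))"
  using rho_le_kappa rho_special_values(1) kappa_special_values kappa_special_bound
  by (auto intro!: rho_strict_mono kappa_strict_mono)

text \<open>Part (b): by Schur, \<open>A = U T U\<^sup>*\<close> with \<open>U\<close> unitary and \<open>T\<close> upper triangular; every quantity
  in the statement is invariant under this conjugation, so the triangular case applies.\<close>
lemma near_idempotent_2x2:
  fixes A :: "complex^2^2" and \<epsilon> :: real
  assumes defect: "hs_norm (A - A ** A) \<le> \<epsilon>" and small: "\<epsilon> < 2/9"
  shows "hs_norm (2 *\<^sub>R A - mat 1) \<ge> sqrt (2 - 6 * hs_norm (A - A ** A)) \<and>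
      trace A \<in> (\<Union>j\<in>{0,1,2::nat}. cball (of_nat j) (sqrt 2 * rho \<epsilon> * \<epsilon>)) \<and>
      (\<Union>j\<in>{0,1,2::nat}. cball (of_nat j :: complex) (sqrt 2 * rho \<epsilon> * \<epsilon>))
        \<subseteq> (\<Union>j\<in>{0,1,2::nat}. cball (of_nat j) (10/21)) \<and>
      (cmod (trace A - 2) < 1/2 \<longrightarrow> hs_norm (mat 1 - A) \<le> kappa \<epsilon> * \<epsilon>) \<and>
      (cmod (trace A) < 1/2 \<longrightarrow> hs_norm A \<le> kappa \<epsilon> * \<epsilon>) \<and>
      (cmod (trace A - 1) < 1/2 \<longrightarrow>
         (\<exists>P::complex^2^2. P ** P = P \<and> rank P = 1 \<and> hs_norm (A - P) \<le> rho \<epsilon> * \<epsilon>))"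
proof -
  obtain U T where U: "unitary U" and T_lower: "T$2$1 = 0" and A_eq: "A = conj_by U T"
    by (rule schur_form_2x2)
  have defect_eq: "hs_norm (A - A ** A) = hs_norm (T - T ** T)"
    by (simp add: A_eq conj_by_mult[OF U, symmetric] conj_by_diff[symmetric] hs_norm_conj_by[OF U])
  interpret upper_near_idempotent T \<epsilon>
    using T_lower defect small by unfold_locales (simp_all add: defect_eq[symmetric])
  have trace_eq: "trace A = trace T"
    by (simp add: A_eq trace_conj_by[OF U])
  have "2 *\<^sub>R A - mat 1 = conj_by U (2 *\<^sub>R T - mat 1)"
    by (simp add: A_eq conj_by_diff conj_by_scaleR conj_by_id[OF U])
  then have reflection: "sqrt (2 - 6 * hs_norm (A - A ** A)) \<le> hs_norm (2 *\<^sub>R A - mat 1)"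
    using hs_norm_reflection_lower by (simp add: defect_eq hs_norm_conj_by[OF U])
  have trace_in_discs: "trace A \<in> (\<Union>j\<in>{0,1,2::nat}. cball (of_nat j) r)"
    using trace_near_integer by (auto simp: trace_eq dist_norm norm_minus_commute)
  have discs_subset: "(\<Union>j\<in>{0,1,2::nat}. cball (of_nat j :: complex) r)
      \<subseteq> (\<Union>j\<in>{0,1,2::nat}. cball (of_nat j) (10/21))"
    using disc_radius_le[OF eps_nonneg small] by auto
  have "mat 1 - A = conj_by U (mat 1 - T)"
    by (simp add: A_eq conj_by_diff conj_by_id[OF U])
  then have near_two: "cmod (trace A - 2) < 1/2 \<Longrightarrow> hs_norm (mat 1 - A) \<le> kappa \<epsilon> * \<epsilon>"
    using trace_near_two by (simp add: trace_eq hs_norm_conj_by[OF U])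
  have near_zero: "cmod (trace A) < 1/2 \<Longrightarrow> hs_norm A \<le> kappa \<epsilon> * \<epsilon>"
    unfolding trace_eq using trace_near_zero by (simp add: A_eq hs_norm_conj_by[OF U])
  have near_one: "\<exists>P::complex^2^2. P ** P = P \<and> rank P = 1 \<and> hs_norm (A - P) \<le> rho \<epsilon> * \<epsilon>"
    if near: "cmod (trace A - 1) < 1/2"
  proof -
    obtain Q where Q: "Q ** Q = Q" "trace Q = 1" "hs_norm (T - Q) \<le> rho \<epsilon> * \<epsilon>"
      using trace_near_one near by (auto simp: trace_eq)
    have "conj_by U Q ** conj_by U Q = conj_by U Q" "trace (conj_by U Q) = 1"
      using Q by (simp_all add: conj_by_mult[OF U, symmetric] trace_conj_by[OF U])
    moreover have "hs_norm (A - conj_by U Q) \<le> rho \<epsilon> * \<epsilon>"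
      using Q by (simp add: A_eq conj_by_diff[symmetric] hs_norm_conj_by[OF U])
    ultimately show ?thesis
      by (blast intro: idempotent_trace_one_rank_one)
  qed
  show ?thesis
    using reflection trace_in_discs discs_subset near_two near_zero near_one by blast
qed

theorem lemmal:
  shows
  "(strict_mono_on {0..1/4} rho \<and> strict_mono_on {0..1/4} kappa \<and>
    (\<forall>t\<in>{0..1/4}. rho t \<le> kappa t) \<and>
    (\<forall>n::nat. n \<ge> 1 \<longrightarrow>
       rho (real n / (real n + 1)^2) = (real n + 1) / real n \<and>
       kappa (real n / (real n + 1)^2) = inverse (1 - sqrt 2 / (real n + 1)) \<and>
       inverse (1 - sqrt 2 / (real n + 1)) < inverse (1 - 10 / (7 * (real n + 1)))))
   \<and>
   (\<forall>(A::complex^2^2) (\<epsilon>::real). hs_norm (A - A ** A) \<le> \<epsilon> \<and> \<epsilon> < 2/9 \<longrightarrow>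
      hs_norm (2 *\<^sub>R A - mat 1) \<ge> sqrt (2 - 6 * hs_norm (A - A ** A)) \<and>
      trace A \<in> (\<Union>j\<in>{0,1,2::nat}. cball (of_nat j) (sqrt 2 * rho \<epsilon> * \<epsilon>)) \<and>
      (\<Union>j\<in>{0,1,2::nat}. cball (of_nat j :: complex) (sqrt 2 * rho \<epsilon> * \<epsilon>))
        \<subseteq> (\<Union>j\<in>{0,1,2::nat}. cball (of_nat j) (10/21)) \<and>
      (cmod (trace A - 2) < 1/2 \<longrightarrow> hs_norm (mat 1 - A) \<le> kappa \<epsilon> * \<epsilon>) \<and>
      (cmod (trace A) < 1/2 \<longrightarrow> hs_norm A \<le> kappa \<epsilon> * \<epsilon>) \<and>
      (cmod (trace A - 1) < 1/2 \<longrightarrow>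
         (\<exists>P::complex^2^2. P ** P = P \<and> rank P = 1 \<and> hs_norm (A - P) \<le> rho \<epsilon> * \<epsilon>)))"
  using rho_kappa_properties near_idempotent_2x2 by blast

end
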